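(* Let $A,E\in\mathbb{R}^{n\times m}$, $\widetilde A=A+E$, $1\le r<\min\{n,m\}$, with full SVDs $A=U\Sigma V^T$ and $\widetilde A=\widetilde U\widetilde\Sigma\widetilde V^T$, and let $A_r=U_1\Sigma_1V_1^T$, $\widetilde A_r=\widetilde U_1\widetilde\Sigma_1\widetilde V_1^T$. Then \[A_r-\widetilde A_r=U\begin{pmatrix}-U_1^TE\widetilde V_1 & -U_1^TE\widetilde V_2\\ -U_2^TAV_2V_2^T\widetilde V_1 & 0\end{pmatrix}\widetilde V^T+U\begin{pmatrix}0 & U_1^T\widetilde U_2\widetilde U_2^T\widetilde A\widetilde V_2\\ -U_2^TE\widetilde V_1 & 0\end{pmatrix}\widetilde V^T.\]
   Context: In the full SVDs, $U,\widetilde U\in\mathbb{R}^{n\times n}$ and $V,\widetilde V\in\mathbb{R}^{m\times m}$ are orthogonal and the singular values are in nonincreasing order. $U=(U_1\ U_2)$, $\widetilde U=(\widetilde U_1\ \widetilde U_2)$ with $U_1,\widetilde U_1\in\mathbb{R}^{n\times r}$; $V=(V_1\ V_2)$, $\widetilde V=(\widetilde V_1\ \widetilde V_2)$ with $V_1,\widetilde V_1\in\mathbb{R}^{m\times r}$; $\Sigma_1,\widetilde\Sigma_1$ are the $r\times r$ diagonal matrices of the $r$ largest singular values of $A$ and $\widetilde A$. *)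

theory Defs
  imports "Jordan_Normal_Form.Matrix"
begin

definition orth_mat :: "nat \<Rightarrow> real mat \<Rightarrow> bool" where
  "orth_mat k Q \<longleftrightarrow> Q \<in> carrier_mat k k \<and> transpose_mat Q * Q = 1\<^sub>m k"

definition full_svd :: "nat \<Rightarrow> nat \<Rightarrow> real mat \<Rightarrow> real mat \<Rightarrow> real mat \<Rightarrow> real mat \<Rightarrow> bool" where
  "full_svd n m A U S V \<longleftrightarrow>
     A \<in> carrier_mat n m \<and> orth_mat n U \<and> orth_mat m V \<and> S \<in> carrier_mat n m \<and>
     (\<forall>i<n. \<forall>j<m. i \<noteq> j \<longrightarrow> S $$ (i,j) = 0) \<and>
     (\<forall>i<min n m. 0 \<le> S $$ (i,i)) \<and>
     (\<forall>i j. i \<le> j \<longrightarrow> j < min n m \<longrightarrow> S $$ (j,j) \<le> S $$ (i,i)) \<and>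
     A = U * S * transpose_mat V"

definition cols_first :: "nat \<Rightarrow> 'a mat \<Rightarrow> 'a mat" where
  "cols_first r Q = mat (dim_row Q) r (\<lambda>(i,j). Q $$ (i,j))"

definition cols_last :: "nat \<Rightarrow> 'a mat \<Rightarrow> 'a mat" where
  "cols_last r Q = mat (dim_row Q) (dim_col Q - r) (\<lambda>(i,j). Q $$ (i, j + r))"

definition lead_block :: "nat \<Rightarrow> 'a mat \<Rightarrow> 'a mat" where
  "lead_block r S = mat r r (\<lambda>(i,j). S $$ (i,j))"

end

theory Submission
  imports Defs "Jordan_Normal_Form.Determinant"
begin

text \<open>Write P = U1 U1^T, P' = U2 U2^T, Q = Vt1 Vt1^T and Q' = Vt2 Vt2^T, so that P + P' = I and
  Q + Q' = I. Because the middle factor of an SVD is rectangular diagonal, U1^T A = Sigma1 V1^T and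
  At Vt1 = Ut1 Sigmat1; hence the truncations are A_r = P A and At_r = At Q, and in the same way
  U2^T A V2 V2^T = U2^T A and Ut2 Ut2^T At Vt2 = At Vt2. After these simplifications, expanding the
  block products turns the right-hand side into - P E Q - P E Q' - P' A Q + P At Q' - P' E Q, which
  the two resolutions of the identity collapse to P A - At Q.\<close>

definition trail_block :: "nat \<Rightarrow> 'a mat \<Rightarrow> 'a mat" where
  "trail_block r S = mat (dim_row S - r) (dim_col S - r) (\<lambda>(i,j). S $$ (i + r, j + r))"

lemma dim_cols_first_cols_last [simp]:
  "dim_row (cols_first r X) = dim_row X" "dim_col (cols_first r X) = r"
  "dim_row (cols_last r X) = dim_row X" "dim_col (cols_last r X) = dim_col X - r"
  by (simp_all add: cols_first_def cols_last_def)

lemma dim_lead_block_trail_block [simp]: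
  "dim_row (lead_block r X) = r" "dim_col (lead_block r X) = r"
  "dim_row (trail_block r X) = dim_row X - r" "dim_col (trail_block r X) = dim_col X - r"
  by (simp_all add: lead_block_def trail_block_def)

lemma index_cols_first [simp]: "i < dim_row X \<Longrightarrow> j < r \<Longrightarrow> cols_first r X $$ (i,j) = X $$ (i,j)"
  by (simp add: cols_first_def)

lemma index_cols_last [simp]:
  "i < dim_row X \<Longrightarrow> j < dim_col X - r \<Longrightarrow> cols_last r X $$ (i,j) = X $$ (i, j + r)"
  by (simp add: cols_last_def)

lemma index_lead_block [simp]: "i < r \<Longrightarrow> j < r \<Longrightarrow> lead_block r X $$ (i,j) = X $$ (i,j)"
  by (simp add: lead_block_def)

lemma index_trail_block [simp]:
  "i < dim_row X - r \<Longrightarrow> j < dim_col X - r \<Longrightarrow> trail_block r X $$ (i,j) = X $$ (i + r, j + r)"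
  by (simp add: trail_block_def)

lemma trail_block_one_mat [simp]: "trail_block r (1\<^sub>m n) = 1\<^sub>m (n - r)"
  by (rule eq_matI) auto

lemma transpose_lead_block:
  "r \<le> dim_row S \<Longrightarrow> r \<le> dim_col S \<Longrightarrow> transpose_mat (lead_block r S) = lead_block r (transpose_mat S)"
  by (rule eq_matI) auto

lemma transpose_trail_block: "transpose_mat (trail_block r S) = trail_block r (transpose_mat S)"
  by (rule eq_matI) auto

lemma diagonal_mat_transpose [simp]: "diagonal_mat (transpose_mat S) = diagonal_mat S"
  by (auto simp: diagonal_mat_def)

lemma mult_cols_first:
  assumes "dim_col X = dim_row Y" "r \<le> dim_col Y"
  shows "X * cols_first r Y = cols_first r (X * Y)"
  using assms by (intro eq_matI) (auto simp: scalar_prod_def)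

lemma mult_cols_last:
  assumes "dim_col X = dim_row Y"
  shows "X * cols_last r Y = cols_last r (X * Y)"
  using assms by (intro eq_matI) (auto simp: scalar_prod_def)

lemma cols_first_mult_diagonal:
  fixes U S :: "'a::semiring_0 mat"
  assumes "diagonal_mat S" "dim_col U = dim_row S" "r \<le> dim_row S" "r \<le> dim_col S"
  shows "cols_first r (U * S) = cols_first r U * lead_block r S"
proof (rule eq_matI)
  fix i j assume ij: "i < dim_row (cols_first r U * lead_block r S)"
    "j < dim_col (cols_first r U * lead_block r S)"
  have "(\<Sum>k\<in>{0..<dim_row S}. U $$ (i,k) * S $$ (k,j)) = (\<Sum>k\<in>{0..<r}. U $$ (i,k) * S $$ (k,j))"
    using assms ij by (intro sum.mono_neutral_right) (auto simp: diagonal_mat_def)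
  then show "cols_first r (U * S) $$ (i,j) = (cols_first r U * lead_block r S) $$ (i,j)"
    using assms ij by (simp add: scalar_prod_def)
qed simp_all

lemma cols_last_mult_diagonal:
  fixes U S :: "'a::semiring_0 mat"
  assumes "diagonal_mat S" "dim_col U = dim_row S" "r \<le> dim_row S"
  shows "cols_last r (U * S) = cols_last r U * trail_block r S"
proof (rule eq_matI)
  fix i j assume ij: "i < dim_row (cols_last r U * trail_block r S)"
    "j < dim_col (cols_last r U * trail_block r S)"
  let ?f = "\<lambda>k. U $$ (i,k) * S $$ (k, j + r)"
  have "(\<Sum>k\<in>{0..<dim_row S}. ?f k) = (\<Sum>k\<in>{r..<dim_row S}. ?f k)"
    using assms ij by (intro sum.mono_neutral_right) (auto simp: diagonal_mat_def)
  also have "\<dots> = (\<Sum>k\<in>{0..<dim_row S - r}. ?f (k + r))"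
    using sum.shift_bounds_nat_ivl[of ?f 0 r "dim_row S - r"] assms by simp
  finally show "cols_last r (U * S) $$ (i,j) = (cols_last r U * trail_block r S) $$ (i,j)"
    using assms ij by (simp add: scalar_prod_def)
qed simp_all

lemma mult_cols_first_diagonal:
  fixes A V U S :: "'a::semiring_0 mat"
  assumes AV: "A * V = U * S" and "diagonal_mat S" "dim_col A = dim_row V" "dim_col U = dim_row S"
    "r \<le> dim_row S" "r \<le> dim_col S"
  shows "A * cols_first r V = cols_first r U * lead_block r S"
proof -
  have "dim_col V = dim_col S"
    using arg_cong[OF AV, of dim_col] by simp
  then show ?thesis
    using assms by (simp add: mult_cols_first cols_first_mult_diagonal)
qed

lemma mult_cols_last_diagonal:
  fixes A V U S :: "'a::semiring_0 mat"
  assumes "A * V = U * S" "diagonal_mat S" "dim_col A = dim_row V" "dim_col U = dim_row S" "r \<le> dim_row S"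
  shows "A * cols_last r V = cols_last r U * trail_block r S"
  using assms by (simp add: mult_cols_last cols_last_mult_diagonal)

lemma transpose_cols_last_mult_cols_last:
  assumes "dim_row X = dim_row Y"
  shows "transpose_mat (cols_last r X) * cols_last r Y = trail_block r (transpose_mat X * Y)"
  using assms by (intro eq_matI) (auto simp: scalar_prod_def)

lemma cols_first_cols_last_mult_transpose:
  fixes X Y :: "'a::semiring_0 mat"
  assumes "dim_col X = dim_col Y" "r \<le> dim_col Y"
  shows "cols_first r X * transpose_mat (cols_first r Y) + cols_last r X * transpose_mat (cols_last r Y)
    = X * transpose_mat Y"
proof (rule eq_matI)
  fix i j assume ij: "i < dim_row (X * transpose_mat Y)" "j < dim_col (X * transpose_mat Y)"
  let ?f = "\<lambda>k. X $$ (i,k) * Y $$ (j,k)"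
  have "(\<Sum>k\<in>{0..<dim_col Y}. ?f k) = (\<Sum>k\<in>{0..<r}. ?f k) + (\<Sum>k\<in>{r..<dim_col Y}. ?f k)"
    using assms by (simp add: sum.atLeastLessThan_concat)
  also have "(\<Sum>k\<in>{r..<dim_col Y}. ?f k) = (\<Sum>k\<in>{0..<dim_col Y - r}. ?f (k + r))"
    using sum.shift_bounds_nat_ivl[of ?f 0 r "dim_col Y - r"] assms by simp
  finally show "(cols_first r X * transpose_mat (cols_first r Y) + cols_last r X * transpose_mat (cols_last r Y)) $$ (i,j)
    = (X * transpose_mat Y) $$ (i,j)"
    using assms ij by (simp add: scalar_prod_def)
qed simp_all

lemma assoc_mult_mat_dims:
  fixes A B C :: "'a::semiring_0 mat"
  assumes "dim_col A = dim_row B" "dim_col B = dim_row C"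
  shows "A * B * C = A * (B * C)"
  using assms by (intro assoc_mult_mat) auto

lemma mult_mult_transpose_sandwich:
  fixes X M Y :: "'a::semiring_0 mat"
  assumes "dim_row M = dim_row X" "dim_col M = dim_row Y"
  shows "X * (transpose_mat X * M * Y) * transpose_mat Y = X * transpose_mat X * M * (Y * transpose_mat Y)"
  using assms by (simp add: assoc_mult_mat_dims)

lemma four_block_cols_first_cols_last:
  "X \<in> carrier_mat k (p + p') \<Longrightarrow>
    four_block_mat (cols_first p X) (cols_last p X) (0\<^sub>m 0 p) (0\<^sub>m 0 p') = X"
  by (rule eq_matI) auto

lemma four_block_transpose_cols_first_cols_last:
  "Y \<in> carrier_mat k (q + q') \<Longrightarrow>
    four_block_mat (transpose_mat (cols_first q Y)) (0\<^sub>m q 0) (transpose_mat (cols_last q Y)) (0\<^sub>m q' 0)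
    = transpose_mat Y"
  by (rule eq_matI) auto

lemma four_block_mat_empty_blocks:
  "B \<in> carrier_mat (dim_row A) 0 \<Longrightarrow> C \<in> carrier_mat 0 (dim_col A) \<Longrightarrow> D \<in> carrier_mat 0 0 \<Longrightarrow>
    four_block_mat A B C D = A"
  by (rule eq_matI) auto

lemma mult_four_block_mult_transpose:
  fixes X Y C11 C12 C21 C22 :: "'a::semiring_0 mat"
  assumes X: "X \<in> carrier_mat k (p + p')" and Y: "Y \<in> carrier_mat l (q + q')"
    and C: "C11 \<in> carrier_mat p q" "C12 \<in> carrier_mat p q'" "C21 \<in> carrier_mat p' q" "C22 \<in> carrier_mat p' q'"
  defines "X1 \<equiv> cols_first p X" and "X2 \<equiv> cols_last p X"
    and "Y1 \<equiv> cols_first q Y" and "Y2 \<equiv> cols_last q Y"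
  shows "X * four_block_mat C11 C12 C21 C22 * transpose_mat Y =
    X1 * C11 * transpose_mat Y1 + X1 * C12 * transpose_mat Y2
    + X2 * C21 * transpose_mat Y1 + X2 * C22 * transpose_mat Y2"
proof -
  have c: "X1 \<in> carrier_mat k p" "X2 \<in> carrier_mat k p'"
    "transpose_mat Y1 \<in> carrier_mat q l" "transpose_mat Y2 \<in> carrier_mat q' l"
    using X Y by (auto simp: X1_def X2_def Y1_def Y2_def)
  have X_blocks: "X = four_block_mat X1 X2 (0\<^sub>m 0 p) (0\<^sub>m 0 p')"
    unfolding X1_def X2_def using four_block_cols_first_cols_last[OF X] by simp
  have Y_blocks: "transpose_mat Y = four_block_mat (transpose_mat Y1) (0\<^sub>m q 0) (transpose_mat Y2) (0\<^sub>m q' 0)"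
    unfolding Y1_def Y2_def using four_block_transpose_cols_first_cols_last[OF Y] by simp
  have "X * four_block_mat C11 C12 C21 C22 =
    four_block_mat (X1 * C11 + X2 * C21) (X1 * C12 + X2 * C22)
      (0\<^sub>m 0 p * C11 + 0\<^sub>m 0 p' * C21) (0\<^sub>m 0 p * C12 + 0\<^sub>m 0 p' * C22)"
    unfolding X_blocks by (rule mult_four_block_mat) (use c C in auto)
  also have "\<dots> * transpose_mat Y =
    four_block_mat ((X1 * C11 + X2 * C21) * transpose_mat Y1 + (X1 * C12 + X2 * C22) * transpose_mat Y2)
      ((X1 * C11 + X2 * C21) * 0\<^sub>m q 0 + (X1 * C12 + X2 * C22) * 0\<^sub>m q' 0)
      ((0\<^sub>m 0 p * C11 + 0\<^sub>m 0 p' * C21) * transpose_mat Y1 + (0\<^sub>m 0 p * C12 + 0\<^sub>m 0 p' * C22) * transpose_mat Y2)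
      ((0\<^sub>m 0 p * C11 + 0\<^sub>m 0 p' * C21) * 0\<^sub>m q 0 + (0\<^sub>m 0 p * C12 + 0\<^sub>m 0 p' * C22) * 0\<^sub>m q' 0)"
    unfolding Y_blocks by (rule mult_four_block_mat) (use c C in auto)
  also have "\<dots> = (X1 * C11 + X2 * C21) * transpose_mat Y1 + (X1 * C12 + X2 * C22) * transpose_mat Y2"
    by (rule four_block_mat_empty_blocks) (use c C in auto)
  also have "\<dots> = X1 * C11 * transpose_mat Y1 + X1 * C12 * transpose_mat Y2
      + X2 * C21 * transpose_mat Y1 + X2 * C22 * transpose_mat Y2"
  proof -
    have "(X1 * C11 + X2 * C21) * transpose_mat Y1 = X1 * C11 * transpose_mat Y1 + X2 * C21 * transpose_mat Y1"
      "(X1 * C12 + X2 * C22) * transpose_mat Y2 = X1 * C12 * transpose_mat Y2 + X2 * C22 * transpose_mat Y2"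
      by (rule add_mult_distrib_mat; use c C in auto)+
    then show ?thesis
      using c C by (intro eq_matI) (auto simp: add_ac)
  qed
  finally show ?thesis .
qed

lemma orth_mat_mult_transpose:
  "orth_mat n Q \<Longrightarrow> Q * transpose_mat Q = 1\<^sub>m n"
  using mat_mult_left_right_inverse[of "transpose_mat Q" n Q] by (auto simp: orth_mat_def)

lemma orth_mat_transpose_cols_last_mult:
  "orth_mat n Q \<Longrightarrow> transpose_mat (cols_last r Q) * cols_last r Q = 1\<^sub>m (n - r)"
  by (simp add: orth_mat_def transpose_cols_last_mult_cols_last)

lemma orth_mat_cols_first_cols_last_mult_transpose:
  assumes "orth_mat n Q" "r \<le> n"
  shows "cols_first r Q * transpose_mat (cols_first r Q) + cols_last r Q * transpose_mat (cols_last r Q)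
    = 1\<^sub>m n"
  using assms cols_first_cols_last_mult_transpose[of Q Q r] orth_mat_mult_transpose[OF assms(1)]
  by (auto simp: orth_mat_def)

lemma mult_transpose_orth_mat_cancel:
  assumes "orth_mat m V" "X \<in> carrier_mat k m"
  shows "X * transpose_mat V * V = X"
  using assms by (auto simp: orth_mat_def)

lemma full_svd_dims:
  assumes "full_svd n m A U S V"
  shows "dim_row A = n" "dim_col A = m" "dim_row U = n" "dim_col U = n"
    "dim_row S = n" "dim_col S = m" "dim_row V = m" "dim_col V = m"
  using assms by (auto simp: full_svd_def orth_mat_def)

lemma full_svd_diagonal: "full_svd n m A U S V \<Longrightarrow> diagonal_mat S"
  by (auto simp: full_svd_def diagonal_mat_def)

lemma full_svd_mult_right:
  assumes "full_svd n m A U S V"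
  shows "A * V = U * S"
  using assms mult_transpose_orth_mat_cancel[of m V "U * S" n]
  by (auto simp: full_svd_def orth_mat_def)

lemma full_svd_transpose_mult_right:
  assumes "full_svd n m A U S V"
  shows "transpose_mat A * U = V * transpose_mat S"
proof -
  have c: "U \<in> carrier_mat n n" "S \<in> carrier_mat n m" "V \<in> carrier_mat m m" and "orth_mat n U"
    and A: "A = U * S * transpose_mat V"
    using assms by (auto simp: full_svd_def orth_mat_def)
  have "transpose_mat A = V * (transpose_mat S * transpose_mat U)"
    unfolding A using c
    by (simp add: transpose_mult[of "U * S" n m _ m] transpose_mult[of U n n S m] del: assoc_mult_mat)
  then show ?thesis
    using mult_transpose_orth_mat_cancel[OF \<open>orth_mat n U\<close>, of "V * transpose_mat S" m] c by simp
qed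

lemma full_svd_mult_cols_first:
  assumes "full_svd n m A U S V" "r \<le> min n m"
  shows "A * cols_first r V = cols_first r U * lead_block r S"
  using mult_cols_first_diagonal[OF full_svd_mult_right[OF assms(1)] full_svd_diagonal[OF assms(1)]]
    full_svd_dims[OF assms(1)] assms(2) by simp

lemma full_svd_mult_cols_last:
  assumes "full_svd n m A U S V" "r \<le> n"
  shows "A * cols_last r V = cols_last r U * trail_block r S"
  using mult_cols_last_diagonal[OF full_svd_mult_right[OF assms(1)] full_svd_diagonal[OF assms(1)]]
    full_svd_dims[OF assms(1)] assms(2) by simp

lemma full_svd_transpose_cols_first_mult:
  assumes svd: "full_svd n m A U S V" and r: "r \<le> min n m"
  shows "transpose_mat (cols_first r U) * A = lead_block r S * transpose_mat (cols_first r V)"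
proof -
  note d = full_svd_dims[OF svd]
  have c: "transpose_mat A \<in> carrier_mat m n" "cols_first r U \<in> carrier_mat n r"
    "cols_first r V \<in> carrier_mat m r" "lead_block r (transpose_mat S) \<in> carrier_mat r r"
    using d by auto
  have "transpose_mat A * cols_first r U = cols_first r V * lead_block r (transpose_mat S)"
    using mult_cols_first_diagonal[OF full_svd_transpose_mult_right[OF svd]] full_svd_diagonal[OF svd] d r
    by simp
  then have "transpose_mat (transpose_mat A * cols_first r U)
      = transpose_mat (cols_first r V * lead_block r (transpose_mat S))"
    by simp
  then show ?thesis
    using d r by (simp add: transpose_mult[OF c(1,2)] transpose_mult[OF c(3,4)] transpose_lead_block)
qed

lemma full_svd_transpose_cols_last_mult:
  assumes svd: "full_svd n m A U S V" and r: "r \<le> m"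
  shows "transpose_mat (cols_last r U) * A = trail_block r S * transpose_mat (cols_last r V)"
proof -
  note d = full_svd_dims[OF svd]
  have c: "transpose_mat A \<in> carrier_mat m n" "cols_last r U \<in> carrier_mat n (n - r)"
    "cols_last r V \<in> carrier_mat m (m - r)" "trail_block r (transpose_mat S) \<in> carrier_mat (m - r) (n - r)"
    using d by auto
  have "transpose_mat A * cols_last r U = cols_last r V * trail_block r (transpose_mat S)"
    using mult_cols_last_diagonal[OF full_svd_transpose_mult_right[OF svd]] full_svd_diagonal[OF svd] d r
    by simp
  then have "transpose_mat (transpose_mat A * cols_last r U)
      = transpose_mat (cols_last r V * trail_block r (transpose_mat S))"
    by simp
  then show ?thesis
    by (simp add: transpose_mult[OF c(1,2)] transpose_mult[OF c(3,4)] transpose_trail_block)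
qed

lemma full_svd_truncation_eq_proj_left:
  assumes "full_svd n m A U S V" "r \<le> min n m"
  shows "cols_first r U * lead_block r S * transpose_mat (cols_first r V)
    = cols_first r U * transpose_mat (cols_first r U) * A"
  using full_svd_transpose_cols_first_mult[OF assms] full_svd_dims[OF assms(1)]
  by (simp add: assoc_mult_mat_dims)

lemma full_svd_truncation_eq_proj_right:
  assumes "full_svd n m A U S V" "r \<le> min n m"
  shows "cols_first r U * lead_block r S * transpose_mat (cols_first r V)
    = A * (cols_first r V * transpose_mat (cols_first r V))"
  using full_svd_mult_cols_first[OF assms] full_svd_dims[OF assms(1)]
    assoc_mult_mat_dims[of A "cols_first r V" "transpose_mat (cols_first r V)"]
  by simp

lemma full_svd_cols_last_proj_right:
  assumes svd: "full_svd n m A U S V" and "r \<le> m"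
  defines "U2 \<equiv> cols_last r U" and "V2 \<equiv> cols_last r V"
  shows "transpose_mat U2 * A * V2 * transpose_mat V2 = transpose_mat U2 * A"
proof -
  note d = full_svd_dims[OF svd]
  have rows: "transpose_mat U2 * A = trail_block r S * transpose_mat V2"
    unfolding U2_def V2_def using full_svd_transpose_cols_last_mult[OF assms(1,2)] .
  have "transpose_mat V2 * (V2 * transpose_mat V2) = transpose_mat V2"
    using orth_mat_transpose_cols_last_mult[of m V r] svd d
      assoc_mult_mat_dims[of "transpose_mat V2" V2 "transpose_mat V2"]
    by (simp add: V2_def full_svd_def)
  then have "trail_block r S * transpose_mat V2 * V2 * transpose_mat V2 = trail_block r S * transpose_mat V2"
    using d by (simp add: assoc_mult_mat_dims V2_def)
  then show ?thesis
    by (simp only: rows)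
qed

lemma full_svd_cols_last_proj_left:
  assumes svd: "full_svd n m A U S V" and "r \<le> n" and "dim_col W = n"
  defines "U2 \<equiv> cols_last r U" and "V2 \<equiv> cols_last r V"
  shows "W * U2 * transpose_mat U2 * A * V2 = W * A * V2"
proof -
  note d = full_svd_dims[OF svd]
  have cols: "A * V2 = U2 * trail_block r S"
    unfolding U2_def V2_def using full_svd_mult_cols_last[OF assms(1,2)] .
  have "transpose_mat U2 * (U2 * trail_block r S) = trail_block r S"
    using orth_mat_transpose_cols_last_mult[of n U r] svd d
      assoc_mult_mat_dims[of "transpose_mat U2" U2 "trail_block r S"]
    by (simp add: U2_def full_svd_def)
  then show ?thesis
    using cols d assms(3) by (simp add: assoc_mult_mat_dims U2_def V2_def)
qed

lemma complementary_split_diff: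
  fixes A E P P' Q Q' :: "real mat"
  assumes c: "A \<in> carrier_mat n m" "E \<in> carrier_mat n m" "P \<in> carrier_mat n n" "P' \<in> carrier_mat n n"
    "Q \<in> carrier_mat m m" "Q' \<in> carrier_mat m m"
    and P: "P + P' = 1\<^sub>m n" and Q: "Q + Q' = 1\<^sub>m m"
  shows "P * A - (A + E) * Q
    = - (P * E * Q) + - (P * E * Q') + - (P' * A * Q) + (P * (A + E) * Q' + - (P' * E * Q))"
    (is "?L = ?R")
proof -
  have PE_split: "P * E * Q + P * E * Q' = P * E"
    using mult_add_distrib_mat[of "P * E" n m Q m Q', symmetric] c Q by simp
  have PAt_split: "P * (A + E) * Q + P * (A + E) * Q' = P * (A + E)"
    using mult_add_distrib_mat[of "P * (A + E)" n m Q m Q', symmetric] c Q by simp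
  have AtQ_split: "P * ((A + E) * Q) + P' * ((A + E) * Q) = (A + E) * Q"
    using add_mult_distrib_mat[of P n n P' "(A + E) * Q" m, symmetric] c P
    by (simp add: mult_carrier_mat[of _ n m _ m])
  have left_distrib: "P * (A + E) = P * A + P * E" "P' * (A + E) = P' * A + P' * E"
    using mult_add_distrib_mat[of P n n A m E] mult_add_distrib_mat[of P' n n A m E] c by simp_all
  have P'AtQ_distrib: "P' * (A + E) * Q = P' * A * Q + P' * E * Q"
    using add_mult_distrib_mat[of "P' * A" n m "P' * E" Q m] left_distrib c by simp
  have AtQ_assoc: "P * (A + E) * Q = P * ((A + E) * Q)" "P' * (A + E) * Q = P' * ((A + E) * Q)"
    using c by (simp_all add: assoc_mult_mat[of _ n n _ m _ m])
  show ?thesis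
  proof (rule eq_matI)
    fix i j assume "i < dim_row ?R" "j < dim_col ?R"
    then have ij: "i < n" "j < m"
      using c by simp_all
    note entries = PE_split PAt_split AtQ_split left_distrib(1) P'AtQ_distrib AtQ_assoc
    show "?L $$ (i,j) = ?R $$ (i,j)"
      using entries[THEN arg_cong[where f = "\<lambda>M. M $$ (i,j)"]] ij c by (simp del: index_mult_mat(1))
  qed (use c in simp_all)
qed

lemma orth_four_block_sum_eq_proj_diff:
  fixes A E U W :: "real mat"
  assumes U: "orth_mat n U" and W: "orth_mat m W"
    and A: "A \<in> carrier_mat n m" and E: "E \<in> carrier_mat n m" and r: "r \<le> n" "r \<le> m"
  defines "U1 \<equiv> cols_first r U" and "U2 \<equiv> cols_last r U"
    and "W1 \<equiv> cols_first r W" and "W2 \<equiv> cols_last r W"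
  shows "U * four_block_mat
              (- (transpose_mat U1 * E * W1)) (- (transpose_mat U1 * E * W2))
              (- (transpose_mat U2 * A * W1)) (0\<^sub>m (n - r) (m - r))
          * transpose_mat W
      + U * four_block_mat
              (0\<^sub>m r r) (transpose_mat U1 * (A + E) * W2)
              (- (transpose_mat U2 * E * W1)) (0\<^sub>m (n - r) (m - r))
          * transpose_mat W
    = U1 * transpose_mat U1 * A - (A + E) * (W1 * transpose_mat W1)" (is "?lhs = ?rhs")
proof -
  have c: "U \<in> carrier_mat n (r + (n - r))" "W \<in> carrier_mat m (r + (m - r))"
    "U1 \<in> carrier_mat n r" "U2 \<in> carrier_mat n (n - r)" "W1 \<in> carrier_mat m r" "W2 \<in> carrier_mat m (m - r)"
    using U W r by (auto simp: orth_mat_def U1_def U2_def W1_def W2_def)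
  have blocks:
    "- (transpose_mat U1 * E * W1) \<in> carrier_mat r r"
    "- (transpose_mat U1 * E * W2) \<in> carrier_mat r (m - r)"
    "- (transpose_mat U2 * A * W1) \<in> carrier_mat (n - r) r"
    "0\<^sub>m (n - r) (m - r) \<in> carrier_mat (n - r) (m - r)"
    "0\<^sub>m r r \<in> carrier_mat r r"
    "transpose_mat U1 * (A + E) * W2 \<in> carrier_mat r (m - r)"
    "- (transpose_mat U2 * E * W1) \<in> carrier_mat (n - r) r"
    "0\<^sub>m (n - r) (m - r) \<in> carrier_mat (n - r) (m - r)"
    using c A E by auto
  have "?lhs = U1 * (- (transpose_mat U1 * E * W1)) * transpose_mat W1
        + U1 * (- (transpose_mat U1 * E * W2)) * transpose_mat W2
        + U2 * (- (transpose_mat U2 * A * W1)) * transpose_mat W1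
        + U2 * 0\<^sub>m (n - r) (m - r) * transpose_mat W2
      + (U1 * 0\<^sub>m r r * transpose_mat W1
        + U1 * (transpose_mat U1 * (A + E) * W2) * transpose_mat W2
        + U2 * (- (transpose_mat U2 * E * W1)) * transpose_mat W1
        + U2 * 0\<^sub>m (n - r) (m - r) * transpose_mat W2)"
    unfolding mult_four_block_mult_transpose[OF c(1,2) blocks(1-4)]
      mult_four_block_mult_transpose[OF c(1,2) blocks(5-8)]
    unfolding U1_def U2_def W1_def W2_def ..
  also have "\<dots> = - (U1 * transpose_mat U1 * E * (W1 * transpose_mat W1))
        + - (U1 * transpose_mat U1 * E * (W2 * transpose_mat W2))
        + - (U2 * transpose_mat U2 * A * (W1 * transpose_mat W1))
        + 0\<^sub>m n m
      + (0\<^sub>m n m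
        + U1 * transpose_mat U1 * (A + E) * (W2 * transpose_mat W2)
        + - (U2 * transpose_mat U2 * E * (W1 * transpose_mat W1))
        + 0\<^sub>m n m)"
    using c A E by (simp add: mult_mult_transpose_sandwich del: assoc_mult_mat)
  also have "\<dots> = - (U1 * transpose_mat U1 * E * (W1 * transpose_mat W1))
        + - (U1 * transpose_mat U1 * E * (W2 * transpose_mat W2))
        + - (U2 * transpose_mat U2 * A * (W1 * transpose_mat W1))
      + (U1 * transpose_mat U1 * (A + E) * (W2 * transpose_mat W2)
        + - (U2 * transpose_mat U2 * E * (W1 * transpose_mat W1)))"
    using c by (intro eq_matI) (simp_all del: index_mult_mat(1))
  also have "\<dots> = ?rhs"
    using orth_mat_cols_first_cols_last_mult_transpose[OF U r(1), folded U1_def U2_def]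
      orth_mat_cols_first_cols_last_mult_transpose[OF W r(2), folded W1_def W2_def] c A E
    by (intro complementary_split_diff[symmetric]) auto
  finally show ?thesis .
qed

theorem lemma3p18:
  fixes n m r :: nat and A E U S V Ut St Vt :: "real mat"
  assumes "A \<in> carrier_mat n m" and "E \<in> carrier_mat n m"
    and "1 \<le> r" and "r < min n m"
    and "full_svd n m A U S V"
    and "full_svd n m (A + E) Ut St Vt"
  shows
    "let At = A + E;
         U1 = cols_first r U; U2 = cols_last r U; V1 = cols_first r V; V2 = cols_last r V;
         Ut1 = cols_first r Ut; Ut2 = cols_last r Ut; Vt1 = cols_first r Vt; Vt2 = cols_last r Vt;
         Ar = U1 * lead_block r S * transpose_mat V1;
         Atr = Ut1 * lead_block r St * transpose_mat Vt1
     in Ar - Atr =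
        U * four_block_mat
              (- (transpose_mat U1 * E * Vt1)) (- (transpose_mat U1 * E * Vt2))
              (- (transpose_mat U2 * A * V2 * transpose_mat V2 * Vt1)) (0\<^sub>m (n - r) (m - r))
          * transpose_mat Vt
      + U * four_block_mat
              (0\<^sub>m r r) (transpose_mat U1 * Ut2 * transpose_mat Ut2 * At * Vt2)
              (- (transpose_mat U2 * E * Vt1)) (0\<^sub>m (n - r) (m - r))
          * transpose_mat Vt"
proof -
  have r: "r \<le> min n m" "r \<le> n" "r \<le> m"
    using assms(4) by simp_all
  have "orth_mat n U" "orth_mat m Vt"
    using assms(5,6) by (simp_all add: full_svd_def)
  moreover have "transpose_mat (cols_last r U) * A * cols_last r V * transpose_mat (cols_last r V)
      = transpose_mat (cols_last r U) * A"
    using full_svd_cols_last_proj_right[OF assms(5) r(3)] .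
  moreover have "transpose_mat (cols_first r U) * cols_last r Ut * transpose_mat (cols_last r Ut) * (A + E)
      * cols_last r Vt = transpose_mat (cols_first r U) * (A + E) * cols_last r Vt"
    using full_svd_cols_last_proj_left[OF assms(6) r(2)] full_svd_dims[OF assms(5)] by simp
  ultimately show ?thesis
    unfolding Let_def full_svd_truncation_eq_proj_left[OF assms(5) r(1)]
      full_svd_truncation_eq_proj_right[OF assms(6) r(1)]
    using orth_four_block_sum_eq_proj_diff[OF _ _ assms(1,2) r(2,3), symmetric] by simp
qed

end
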